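(* Let $\Omega\subset\mathbb{C}^2$ be a simply connected domain and let $\{t_n\}_{n\in\mathbb{Z}}$ be nowhere vanishing holomorphic functions on $\Omega$ satisfying $\partial_x\partial_y\log t_n=t_{n+1}t_{n-1}/t_n^2$ for all $n$. Put $s_{n+1}=\partial_y\log(t_n/t_{n+1})$, $r_n=\partial_x\partial_y\log t_n$, $M_n=\partial_x\partial_y+s_{n+1}\partial_x+r_n$, $H_n=\partial_y+s_{n+1}$, $B_n=-r_n^{-1}\partial_x$. Suppose $\{u_n\}_{n\in\mathbb{Z}}$ are holomorphic functions on $\Omega$ with $M_nu_n=0$, $u_{n+1}=H_nu_n$ and $u_{n-1}=B_nu_n$ for all $n\in\mathbb{Z}$. Then $\tau_n=t_nu_n$ satisfies $\partial_x\partial_y\log\tau_n=\tau_{n+1}\tau_{n-1}/\tau_n^2$ for all $n\in\mathbb{Z}$, on any open subset where all $u_n$ are nowhere zero.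
   Context: Note $r_n=t_{n+1}t_{n-1}/t_n^2$ is nowhere zero, so $B_n$ is well defined. *)

theory Defs
  imports "HOL-Analysis.Analysis"
begin

definition holomorphic2 :: "(complex \<times> complex \<Rightarrow> complex) \<Rightarrow> (complex \<times> complex) set \<Rightarrow> bool" where
  "holomorphic2 f S \<longleftrightarrow>
     (\<forall>z\<in>S. \<exists>a b. (f has_derivative (\<lambda>h. a * fst h + b * snd h)) (at z))"

definition dx :: "(complex \<times> complex \<Rightarrow> complex) \<Rightarrow> complex \<times> complex \<Rightarrow> complex" where
  "dx f = (\<lambda>z. deriv (\<lambda>w. f (w, snd z)) (fst z))"

definition dy :: "(complex \<times> complex \<Rightarrow> complex) \<Rightarrow> complex \<times> complex \<Rightarrow> complex" where
  "dy f = (\<lambda>z. deriv (\<lambda>w. f (fst z, w)) (snd z))"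

text \<open>Logarithmic partial derivative: dy (log f) = dy f / f (independent of the branch of log).\<close>
definition dylog :: "(complex \<times> complex \<Rightarrow> complex) \<Rightarrow> complex \<times> complex \<Rightarrow> complex" where
  "dylog f = (\<lambda>z. dy f z / f z)"

definition dxdylog :: "(complex \<times> complex \<Rightarrow> complex) \<Rightarrow> complex \<times> complex \<Rightarrow> complex" where
  "dxdylog f = dx (dylog f)"

end

theory Submission
  imports Defs "HOL-Complex_Analysis.Complex_Analysis"
begin

(* Logarithmic derivatives are additive, so for tau = t u and u = u_n
     dx dy log tau_n = r_n + (u_xy u - u_y u_x) / u^2.
   By M_n u_n = 0 this equals - u_x (u_y + s_{n+1} u) / u^2, which by H_n and B_n is
   r_n u_{n+1} u_{n-1} / u^2, and r_n = t_{n+1} t_{n-1} / t_n^2 makes it tau_{n+1} tau_{n-1} / tau_n^2.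
   The only analytic input is that dy u is holomorphic in x, so that dx (dy u) is a genuine
   derivative: on a polydisc, dy u (x, y) is Cauchy's integral over a circle in y, and such an
   integral depends holomorphically on the parameter x. *)

lemma dist_circlepath: "dist c (circlepath c R s) = \<bar>R\<bar>"
  by (simp add: circlepath dist_norm norm_mult norm_exp_eq_Re)

lemma continuous_on_circlepath_kernel:
  fixes h :: "'a::topological_space \<Rightarrow> complex \<Rightarrow> complex" and k :: "'a \<Rightarrow> complex"
  assumes h: "continuous_on (P \<times> sphere c R) (\<lambda>(p, \<zeta>). h p \<zeta>)"
    and k: "continuous_on P k" and R: "0 \<le> R"
    and k_off: "\<And>p. p \<in> P \<Longrightarrow> k p \<notin> sphere c R"
  shows "continuous_on (P \<times> {0..1}) (\<lambda>(p, s). h p (circlepath c R s) / (circlepath c R s - k p)^2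
           * vector_derivative (circlepath c R) (at s))"
proof -
  let ?\<gamma> = "circlepath c R"
  have "continuous_on (P \<times> {0..1}) (\<lambda>q. (\<lambda>(p, \<zeta>). h p \<zeta>) (fst q, ?\<gamma> (snd q)))"
  proof (rule continuous_on_compose2[OF h])
    show "continuous_on (P \<times> {0..1}) (\<lambda>q. (fst q, ?\<gamma> (snd q)))"
      by (auto simp: circlepath intro!: continuous_intros)
    show "(\<lambda>q. (fst q, ?\<gamma> (snd q))) ` (P \<times> {0..1}) \<subseteq> P \<times> sphere c R"
      using R by (auto simp: dist_circlepath)
  qed
  moreover have "continuous_on (P \<times> {0..1}) (\<lambda>q. k (fst q))"
    by (rule continuous_on_compose2[OF k]) (auto intro: continuous_intros)
  moreover have "?\<gamma> s - k p \<noteq> 0" if "p \<in> P" for p s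
    using k_off[OF that] R dist_circlepath[of c R s] by auto
  ultimately show ?thesis
    unfolding vector_derivative_circlepath split_def
    by (auto intro!: continuous_intros simp: circlepath)
qed

lemma deriv_eq_integral_circlepath:
  fixes g :: "complex \<Rightarrow> complex"
  assumes "continuous_on (cball c R) g" "g holomorphic_on ball c R" "w \<in> ball c R"
  shows "deriv g w = integral {0..1} (\<lambda>s. g (circlepath c R s) / (circlepath c R s - w)^2
                       * vector_derivative (circlepath c R) (at s)) / (2 * pi * \<i>)"
proof -
  have "((\<lambda>s. g (circlepath c R s) / (circlepath c R s - w)^2
           * vector_derivative (circlepath c R) (at s within {0..1})) has_integral 2 * pi * \<i> * deriv g w) {0..1}"
    using Cauchy_has_contour_integral_higher_derivative_circlepath[OF assms, of 1]
    by (simp add: has_contour_integral_def power2_eq_square)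
  then have "((\<lambda>s. g (circlepath c R s) / (circlepath c R s - w)^2
           * vector_derivative (circlepath c R) (at s)) has_integral 2 * pi * \<i> * deriv g w) {0..1}"
    by (rule has_integral_eq[rotated]) (simp add: vector_derivative_circlepath vector_derivative_circlepath01)
  then show ?thesis
    by (simp add: integral_unique)
qed

lemma holomorphic_on_integral_param:
  fixes \<phi> :: "complex \<Rightarrow> real \<Rightarrow> complex"
  assumes cont: "continuous_on (cball c R \<times> {0..1}) (\<lambda>(w, s). \<phi> w s)"
    and hol: "\<And>s. s \<in> {0..1} \<Longrightarrow> (\<lambda>w. \<phi> w s) holomorphic_on ball c R"
  shows "(\<lambda>w. integral {0..1} (\<phi> w)) holomorphic_on ball c R"
proof (cases "0 \<le> R")
  case False
  then show ?thesis by (simp add: ball_empty holomorphic_on_def)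
next
  case R: True
  \<comment> \<open>Leibniz's rule needs a jointly continuous w-derivative D of \<phi>; Cauchy's formula writes it
    as an integral of \<phi> itself over a circle.\<close>
  let ?\<gamma> = "circlepath c R"
  define D where "D w s = integral {0..1} (\<lambda>\<sigma>. \<phi> (?\<gamma> \<sigma>) s / (?\<gamma> \<sigma> - w)^2
                   * vector_derivative ?\<gamma> (at \<sigma>)) / (2 * pi * \<i>)" for w s
  have cont_s: "continuous_on (cball c R) (\<lambda>w. \<phi> w s)" if "s \<in> {0..1}" for s
    by (rule continuous_on_compose2[OF cont, of _ "\<lambda>w. (w, s)", simplified])
      (use that in \<open>auto intro!: continuous_intros\<close>)
  have cont_w: "continuous_on {0..1} (\<phi> w)" if "w \<in> cball c R" for w
    by (rule continuous_on_compose2[OF cont, of _ "\<lambda>s. (w, s)", simplified])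
      (use that in \<open>auto intro!: continuous_intros\<close>)
  have "((\<lambda>w. \<phi> w s) has_field_derivative D w s) (at w within ball c R)"
    if "w \<in> ball c R" "s \<in> cbox 0 1" for w s
    using that holomorphic_derivI[OF hol open_ball, of s w]
      deriv_eq_integral_circlepath[OF cont_s hol, of s w]
    by (simp add: D_def)
  moreover have "\<phi> w integrable_on cbox 0 1" if "w \<in> ball c R" for w
    using integrable_continuous_interval[OF cont_w] that by simp
  moreover have "continuous_on (ball c R \<times> cbox 0 1) (\<lambda>(w, s). D w s)"
  proof -
    have "continuous_on ((ball c R \<times> {0..1}) \<times> {0..1}) (\<lambda>(p, \<sigma>). \<phi> (?\<gamma> \<sigma>) (snd p) / (?\<gamma> \<sigma> - fst p)^2
           * vector_derivative ?\<gamma> (at \<sigma>))"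
    proof (rule continuous_on_circlepath_kernel[OF _ _ R])
      show "continuous_on ((ball c R \<times> {0..1}) \<times> sphere c R) (\<lambda>(p, \<zeta>). \<phi> \<zeta> (snd p))"
        unfolding split_def
        by (rule continuous_on_compose2[OF cont, of _ "\<lambda>q. (snd q, snd (fst q))", simplified])
          (auto intro!: continuous_intros)
    qed (auto intro: continuous_intros)
    from integral_continuous_on_param[OF this[simplified cbox_interval[symmetric]]]
    show ?thesis
      unfolding D_def split_def by (auto intro: continuous_intros)
  qed
  ultimately have "(\<lambda>w. integral (cbox 0 1) (\<phi> w)) holomorphic_on ball c R"
    by (rule leibniz_rule_holomorphic[OF _ _ _ convex_ball])
  then show ?thesis by simp
qed

lemma holomorphic2_subset: "holomorphic2 f S \<Longrightarrow> T \<subseteq> S \<Longrightarrow> holomorphic2 f T"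
  unfolding holomorphic2_def by blast

lemma holomorphic2_imp_continuous_on: "holomorphic2 f S \<Longrightarrow> continuous_on S f"
  unfolding holomorphic2_def
  by (meson continuous_at_imp_continuous_on has_derivative_continuous)

lemma holomorphic2_partial_derivatives:
  assumes "holomorphic2 f S" "(x, y) \<in> S"
  shows "((\<lambda>w. f (w, y)) has_field_derivative dx f (x, y)) (at x)"
    and "((\<lambda>w. f (x, w)) has_field_derivative dy f (x, y)) (at y)"
proof -
  obtain a b where f': "(f has_derivative (\<lambda>h. a * fst h + b * snd h)) (at (x, y))"
    using assms unfolding holomorphic2_def by blast
  have "((\<lambda>w. (w, y)) has_derivative (\<lambda>h. (h, 0))) (at x)"
    by (auto intro!: derivative_eq_intros)
  from has_derivative_compose[OF this f']
  have "((\<lambda>w. f (w, y)) has_field_derivative a) (at x)"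
    by (simp add: has_field_derivative_def o_def)
  then show "((\<lambda>w. f (w, y)) has_field_derivative dx f (x, y)) (at x)"
    using DERIV_imp_deriv by (fastforce simp: dx_def)
  have "((\<lambda>w. (x, w)) has_derivative (\<lambda>h. (0, h))) (at y)"
    by (auto intro!: derivative_eq_intros)
  from has_derivative_compose[OF this f']
  have "((\<lambda>w. f (x, w)) has_field_derivative b) (at y)"
    by (simp add: has_field_derivative_def o_def)
  then show "((\<lambda>w. f (x, w)) has_field_derivative dy f (x, y)) (at y)"
    using DERIV_imp_deriv by (fastforce simp: dy_def)
qed

lemma holomorphic2_holomorphic_on_slices:
  assumes "holomorphic2 f S"
  shows "(\<And>w. w \<in> A \<Longrightarrow> (w, y) \<in> S) \<Longrightarrow> (\<lambda>w. f (w, y)) holomorphic_on A"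
    and "(\<And>w. w \<in> A \<Longrightarrow> (x, w) \<in> S) \<Longrightarrow> (\<lambda>w. f (x, w)) holomorphic_on A"
  using holomorphic2_partial_derivatives[OF assms]
  unfolding holomorphic_on_def field_differentiable_def
  by (meson has_field_derivative_at_within)+

lemma holomorphic2_dy_field_differentiable_fst:
  assumes hol: "holomorphic2 f S" and "open S" "(x, y) \<in> S"
  shows "(\<lambda>w. dy f (w, y)) field_differentiable at x"
proof -
  obtain A B where "open A" "open B" "x \<in> A" "y \<in> B" and AB: "A \<times> B \<subseteq> S"
    using open_prod_elim[OF \<open>open S\<close> \<open>(x, y) \<in> S\<close>] by (metis mem_Sigma_iff)
  obtain r where "r > 0" and r: "cball x r \<subseteq> A"
    using \<open>open A\<close> \<open>x \<in> A\<close> open_contains_cball by metis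
  obtain R where "R > 0" and R: "cball y R \<subseteq> B"
    using \<open>open B\<close> \<open>y \<in> B\<close> open_contains_cball by metis
  have in_S: "(v, w) \<in> S" if "v \<in> cball x r" "w \<in> cball y R" for v w
    using that r R AB by (meson mem_Sigma_iff subsetD)
  let ?\<gamma> = "circlepath y R"
  define \<phi> where "\<phi> w s = f (w, ?\<gamma> s) / (?\<gamma> s - y)^2 * vector_derivative ?\<gamma> (at s)" for w s
  have f_cont: "continuous_on S f"
    by (rule holomorphic2_imp_continuous_on[OF hol])
  have cauchy: "dy f (w, y) = integral {0..1} (\<phi> w) / (2 * pi * \<i>)" if "w \<in> ball x r" for w
  proof -
    have "continuous_on (cball y R) (\<lambda>\<zeta>. f (w, \<zeta>))"
      using that in_S
      by (intro continuous_on_compose2[OF f_cont, of _ "\<lambda>\<zeta>. (w, \<zeta>)"] continuous_intros) auto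
    moreover have "(\<lambda>\<zeta>. f (w, \<zeta>)) holomorphic_on ball y R"
      by (rule holomorphic2_holomorphic_on_slices(2)[OF hol]) (use that in_S in auto)
    ultimately show ?thesis
      using deriv_eq_integral_circlepath[of y R, OF _ _ centre_in_ball[THEN iffD2, OF \<open>R > 0\<close>]]
      by (simp add: dy_def \<phi>_def[abs_def])
  qed
  have "(\<lambda>w. integral {0..1} (\<phi> w)) holomorphic_on ball x r"
  proof (rule holomorphic_on_integral_param)
    have "cball x r \<times> sphere y R \<subseteq> S"
      using in_S sphere_cball by blast
    then have "continuous_on (cball x r \<times> sphere y R) (\<lambda>(w, \<zeta>). f (w, \<zeta>))"
      by (simp add: continuous_on_subset[OF f_cont])
    then show "continuous_on (cball x r \<times> {0..1}) (\<lambda>(w, s). \<phi> w s)"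
      unfolding \<phi>_def
      by (rule continuous_on_circlepath_kernel[OF _ continuous_on_const]) (use \<open>R > 0\<close> in auto)
    have "?\<gamma> s \<in> cball y R" "?\<gamma> s \<noteq> y" for s
      using \<open>R > 0\<close> dist_circlepath[of y R s] by auto
    then show "(\<lambda>w. \<phi> w s) holomorphic_on ball x r" for s
      unfolding \<phi>_def
      by (intro holomorphic_on_mult holomorphic_on_divide holomorphic_on_const
            holomorphic2_holomorphic_on_slices(1)[OF hol]) (use in_S in auto)
  qed
  then have "(\<lambda>w. integral {0..1} (\<phi> w) / (2 * pi * \<i>)) holomorphic_on ball x r"
    by (rule holomorphic_on_divide[OF _ holomorphic_on_const]) simp
  then have "(\<lambda>w. dy f (w, y)) holomorphic_on ball x r"
    by (rule holomorphic_transform) (simp add: cauchy)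
  then show ?thesis
    by (rule holomorphic_on_imp_differentiable_at) (simp_all add: \<open>r > 0\<close>)
qed

lemma dylog_mult:
  assumes "holomorphic2 f S" "holomorphic2 g S" "(x, y) \<in> S" "f (x, y) \<noteq> 0" "g (x, y) \<noteq> 0"
  shows "dylog (\<lambda>w. f w * g w) (x, y) = dylog f (x, y) + dylog g (x, y)"
proof -
  have "((\<lambda>w. f (x, w) * g (x, w)) has_field_derivative
          dy f (x, y) * g (x, y) + dy g (x, y) * f (x, y)) (at y)"
    using holomorphic2_partial_derivatives(2)[OF assms(1,3)] holomorphic2_partial_derivatives(2)[OF assms(2,3)]
    by (rule DERIV_mult)
  then have "dy (\<lambda>w. f w * g w) (x, y) = dy f (x, y) * g (x, y) + dy g (x, y) * f (x, y)"
    by (simp add: dy_def DERIV_imp_deriv)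
  then show ?thesis
    using assms(4,5) by (simp add: dylog_def field_simps)
qed

lemma dylog_has_field_derivative_fst:
  assumes "holomorphic2 g S" "open S" "(x, y) \<in> S" "g (x, y) \<noteq> 0"
  shows "((\<lambda>w. dylog g (w, y)) has_field_derivative
           (dx (dy g) (x, y) * g (x, y) - dy g (x, y) * dx g (x, y)) / (g (x, y))^2) (at x)"
proof -
  have "((\<lambda>w. dy g (w, y)) has_field_derivative dx (dy g) (x, y)) (at x)"
    using field_differentiable_derivI[OF holomorphic2_dy_field_differentiable_fst[OF assms(1-3)]]
    by (simp add: dx_def)
  from DERIV_divide[OF this holomorphic2_partial_derivatives(1)[OF assms(1,3)] assms(4)]
  show ?thesis
    by (simp add: dylog_def power2_eq_square)
qed

lemma dxdylog_eq:
  assumes "holomorphic2 g S" "open S" "(x, y) \<in> S" "g (x, y) \<noteq> 0"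
  shows "dxdylog g (x, y) = (dx (dy g) (x, y) * g (x, y) - dy g (x, y) * dx g (x, y)) / (g (x, y))^2"
  using DERIV_imp_deriv[OF dylog_has_field_derivative_fst[OF assms]]
  by (simp add: dxdylog_def dx_def)

lemma dxdylog_mult:
  assumes f: "holomorphic2 f S" "\<And>z. z \<in> S \<Longrightarrow> f z \<noteq> 0"
    and g: "holomorphic2 g S" "\<And>z. z \<in> S \<Longrightarrow> g z \<noteq> 0"
    and "open S" "(x, y) \<in> S"
  shows "dxdylog (\<lambda>w. f w * g w) (x, y) = dxdylog f (x, y) + dxdylog g (x, y)"
proof -
  have "open ((\<lambda>w. (w, y)) -` S)"
    by (intro continuous_open_vimage \<open>open S\<close> continuous_intros)
  then have "\<forall>\<^sub>F w in nhds x. (w, y) \<in> S"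
    unfolding eventually_nhds using \<open>(x, y) \<in> S\<close> by blast
  then have "\<forall>\<^sub>F w in nhds x. dylog (\<lambda>w. f w * g w) (w, y) = dylog f (w, y) + dylog g (w, y)"
    by (rule eventually_mono) (simp add: dylog_mult[OF f(1) g(1)] f(2) g(2))
  then have "dxdylog (\<lambda>w. f w * g w) (x, y) = deriv (\<lambda>w. dylog f (w, y) + dylog g (w, y)) x"
    unfolding dxdylog_def dx_def by (simp add: deriv_cong_ev)
  also have "\<dots> = dxdylog f (x, y) + dxdylog g (x, y)"
    unfolding dxdylog_def dx_def
    using dylog_has_field_derivative_fst[OF f(1) \<open>open S\<close> \<open>(x, y) \<in> S\<close> f(2)[OF \<open>(x, y) \<in> S\<close>]]
      dylog_has_field_derivative_fst[OF g(1) \<open>open S\<close> \<open>(x, y) \<in> S\<close> g(2)[OF \<open>(x, y) \<in> S\<close>]]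
    by (auto intro!: deriv_add simp: field_differentiable_def)
  finally show ?thesis .
qed

lemma toda_gauge_identity:
  fixes u ux uy uxy u\<^sub>p u\<^sub>m r s t t\<^sub>p t\<^sub>m :: complex
  assumes "u \<noteq> 0" "t \<noteq> 0" "t\<^sub>p \<noteq> 0" "t\<^sub>m \<noteq> 0"
    and r: "r = t\<^sub>p * t\<^sub>m / t^2"
    and M: "uxy + s * ux + r * u = 0"
    and H: "u\<^sub>p = uy + s * u"
    and B: "u\<^sub>m = - (1 / r) * ux"
  shows "r + (uxy * u - uy * ux) / u^2 = (t\<^sub>p * u\<^sub>p) * (t\<^sub>m * u\<^sub>m) / (t * u)^2"
proof -
  have "r \<noteq> 0"
    using assms(2-4) r by simp
  have "(t\<^sub>p * u\<^sub>p) * (t\<^sub>m * u\<^sub>m) / (t * u)^2 = r * u\<^sub>p * u\<^sub>m / u^2"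
    using assms(1,2) by (simp add: r power_mult_distrib field_simps)
  also have "\<dots> = - (uy + s * u) * ux / u^2"
    using \<open>r \<noteq> 0\<close> assms(1) by (simp add: H B field_simps)
  also have "\<dots> = r + (uxy * u - uy * ux) / u^2"
    using assms(1) M by (simp add: field_simps power2_eq_square) algebra
  finally show ?thesis ..
qed

theorem mainTheorem14:
  fixes \<Omega> :: "(complex \<times> complex) set"
    and t u :: "int \<Rightarrow> complex \<times> complex \<Rightarrow> complex"
    and U :: "(complex \<times> complex) set"
  assumes dom: "open \<Omega>" "connected \<Omega>" "\<Omega> \<noteq> {}"
    and sc: "simply_connected \<Omega>"
    and t_hol: "\<And>n. holomorphic2 (t n) \<Omega>"
    and t_nz: "\<And>n z. z \<in> \<Omega> \<Longrightarrow> t n z \<noteq> 0"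
    and toda: "\<And>n z. z \<in> \<Omega> \<Longrightarrow>
                 dxdylog (t n) z = t (n + 1) z * t (n - 1) z / (t n z)^2"
    and u_hol: "\<And>n. holomorphic2 (u n) \<Omega>"
    and M: "\<And>n z. z \<in> \<Omega> \<Longrightarrow>
              dx (dy (u n)) z + dylog (\<lambda>w. t n w / t (n + 1) w) z * dx (u n) z
                + dxdylog (t n) z * u n z = 0"
    and H: "\<And>n z. z \<in> \<Omega> \<Longrightarrow>
              u (n + 1) z = dy (u n) z + dylog (\<lambda>w. t n w / t (n + 1) w) z * u n z"
    and B: "\<And>n z. z \<in> \<Omega> \<Longrightarrow>
              u (n - 1) z = - (1 / dxdylog (t n) z) * dx (u n) z"
    and U: "open U" "U \<subseteq> \<Omega>"
    and u_nz: "\<And>n z. z \<in> U \<Longrightarrow> u n z \<noteq> 0"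
  shows "\<forall>n. \<forall>z\<in>U.
           dxdylog (\<lambda>w. t n w * u n w) z
             = (t (n + 1) z * u (n + 1) z) * (t (n - 1) z * u (n - 1) z) / (t n z * u n z)^2"
proof (intro allI ballI)
  \<comment> \<open>Of the hypotheses on \<Omega> only U \<subseteq> \<Omega> is used: simple connectivity serves to define
    log t n, but only the logarithmic derivatives dy f / f occur, which need no branch of log.\<close>
  fix n and z assume "z \<in> U"
  then have "z \<in> \<Omega>"
    using U(2) by blast
  obtain x y where z: "z = (x, y)"
    by (cases z)
  have hol_U: "holomorphic2 (t n) U" "holomorphic2 (u n) U"
    using t_hol u_hol U(2) by (blast intro: holomorphic2_subset)+
  have t_nz_U: "\<And>z. z \<in> U \<Longrightarrow> t n z \<noteq> 0"
    using t_nz U(2) by blast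
  have "dxdylog (\<lambda>w. t n w * u n w) z = dxdylog (t n) z + dxdylog (u n) z"
    using dxdylog_mult[OF hol_U(1) t_nz_U hol_U(2) u_nz U(1)] \<open>z \<in> U\<close> unfolding z by blast
  also have "dxdylog (u n) z = (dx (dy (u n)) z * u n z - dy (u n) z * dx (u n) z) / (u n z)^2"
    using dxdylog_eq[OF hol_U(2) U(1)] u_nz \<open>z \<in> U\<close> unfolding z by blast
  also have "dxdylog (t n) z + \<dots>
      = (t (n + 1) z * u (n + 1) z) * (t (n - 1) z * u (n - 1) z) / (t n z * u n z)^2"
    using \<open>z \<in> \<Omega>\<close> \<open>z \<in> U\<close>
    by (intro toda_gauge_identity[OF u_nz t_nz t_nz t_nz toda M H B])
  finally show "dxdylog (\<lambda>w. t n w * u n w) z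
      = (t (n + 1) z * u (n + 1) z) * (t (n - 1) z * u (n - 1) z) / (t n z * u n z)^2" .
qed

end
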